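(* Consider the two-stage cooperative cellular/D2D recovery model described in the context, with lossless links in the second stage. For any network coding scheme used in the second stage, the packet completion time satisfies \[ T \geq \left\lceil \max\Big(|\mathcal{M}_c|,\ \tfrac{1}{2}\max_{n \in \mathcal{N}} |\mathcal{W}_n|\Big) \right\rceil . \]
   Context: Model: a set $\mathcal{N}$ of $N\ge 2$ cooperating mobile devices want a common finite set $\mathcal{M}$ of packets. After a lossy first-stage cellular broadcast, device $n$ holds its Has set $\mathcal{H}_n\subseteq\mathcal{M}$ and misses its Wants set $\mathcal{W}_n=\mathcal{M}\setminus\mathcal{H}_n$; every packet of $\mathcal{M}$ is wanted by some device; $\mathcal{M}_c=\bigcap_{n\in\mathcal{N}}\mathcal{W}_n$. In the second stage time is slotted; in each slot the source (holding all packets) may broadcast one coded packet over cellular links to all devices, and simultaneously one device may broadcast over D2D links to all other devices one coded packet formed from packets it holds; all second-stage transmissions are received without loss. The packet completion time $T$ is the number of second-stage slots until every device has decoded all packets in its Wants set. *)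

theory Defs
  imports Complex_Main
begin

text \<open>Packet contents are given by x :: 'm \<Rightarrow> 'a over a finite
alphabet 'a.  A (deterministic, possibly nonlinear) coding scheme consists of
  src t   : the source's coded packet in slot t, a function of all packets of M;
  sched t : the device broadcasting over D2D in slot t (None: no D2D transmission);
  enc t d : the D2D coded packet of device d in slot t, a function of what d holds,
            i.e. its Has packets and everything received in earlier slots.\<close>

definition restr :: "('m \<Rightarrow> 'a) \<Rightarrow> 'm set \<Rightarrow> 'm \<Rightarrow> 'a option" where
  "restr x A = (\<lambda>m. if m \<in> A then Some (x m) else None)"

text \<open>Transcript of the first t second-stage slots (all transmissions are lossless
broadcasts, so every device receives every entry).\<close>
fun transcript ::
  "'m set \<Rightarrow> ('n \<Rightarrow> 'm set)
   \<Rightarrow> (nat \<Rightarrow> ('m \<Rightarrow> 'a option) \<Rightarrow> 'a)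
   \<Rightarrow> (nat \<Rightarrow> 'n option)
   \<Rightarrow> (nat \<Rightarrow> 'n \<Rightarrow> ('m \<Rightarrow> 'a option) \<Rightarrow> ('a \<times> 'a option) list \<Rightarrow> 'a)
   \<Rightarrow> ('m \<Rightarrow> 'a) \<Rightarrow> nat \<Rightarrow> ('a \<times> 'a option) list" where
  "transcript M H src sched enc x 0 = []"
| "transcript M H src sched enc x (Suc t) =
     transcript M H src sched enc x t @
     [(src t (restr x M),
       (case sched t of None \<Rightarrow> None
        | Some d \<Rightarrow> Some (enc t d (restr x (H d)) (transcript M H src sched enc x t))))]"

text \<open>Device n has decoded its Wants set M - H n after T slots: its Has packets together
with the received transmissions determine all packets it wants.\<close>
definition decoded_by ::
  "'m set \<Rightarrow> ('n \<Rightarrow> 'm set)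
   \<Rightarrow> (nat \<Rightarrow> ('m \<Rightarrow> 'a option) \<Rightarrow> 'a)
   \<Rightarrow> (nat \<Rightarrow> 'n option)
   \<Rightarrow> (nat \<Rightarrow> 'n \<Rightarrow> ('m \<Rightarrow> 'a option) \<Rightarrow> ('a \<times> 'a option) list \<Rightarrow> 'a)
   \<Rightarrow> 'n \<Rightarrow> nat \<Rightarrow> bool" where
  "decoded_by M H src sched enc n T \<longleftrightarrow>
     (\<forall>x y. restr x (H n) = restr y (H n) \<and>
            transcript M H src sched enc x T = transcript M H src sched enc y T
            \<longrightarrow> (\<forall>m \<in> M - H n. x m = y m))"

end

theory Submission
  imports Defs "HOL-Library.FuncSet" "HOL-Library.Cardinality"
begin

text \<open>A counting argument over the packet alphabet, of size \<open>q\<close>.  Fix the packets outside a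
set \<open>A\<close> wanted by device \<open>n\<close>.  Device \<open>n\<close> decodes from its Has packets, which do not involve
\<open>A\<close>, and the transcript, so the \<open>q^|A|\<close> contents of \<open>A\<close> give pairwise distinct transcripts.
Every slot carries a source symbol and, exactly when the fixed schedule says so, a D2D symbol;
hence there are at most \<open>q^(2T)\<close> transcripts and \<open>|W_n| \<le> 2T\<close>.  For \<open>A = M_c\<close> no device holds
a packet of \<open>A\<close>, so each D2D packet is a function of the earlier slots alone: the \<open>T\<close> source
symbols determine the transcript, and \<open>|M_c| \<le> T\<close>.\<close>

lemma length_transcript: "length (transcript M H src sched enc x t) = t"
  by (induction t) auto

lemma transcript_D2D_slots:
  "map (\<lambda>p. snd p = None) (transcript M H src sched enc x t) = map (\<lambda>i. sched i = None) [0..<t]"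
  by (induction t) (auto split: option.split)

lemma transcript_eq_if_source_packets_eq:
  assumes "\<forall>t d. sched t = Some d \<longrightarrow> d \<in> N"
    and "\<forall>d\<in>N. restr x (H d) = restr y (H d)"
    and "map fst (transcript M H src sched enc x t) = map fst (transcript M H src sched enc y t)"
  shows "transcript M H src sched enc x t = transcript M H src sched enc y t"
  using assms(3)
proof (induction t)
  case (Suc t)
  then have "transcript M H src sched enc x t = transcript M H src sched enc y t"
    and "src t (restr x M) = src t (restr y M)"
    by (simp_all add: length_transcript)
  with assms(1,2) show ?case
    by (auto split: option.split)
qed simp

lemma option_eq_if_case_option_eq:
  "case_option c id b = case_option c id b' \<Longrightarrow> (b = None) = (b' = None) \<Longrightarrow> b = b'"
  by (cases b; cases b') auto

lemma list_eq_if_erased_eq_and_None_pattern_eq: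
  fixes xs ys :: "('a \<times> 'b option) list"
  assumes "map (map_prod id (case_option c id)) xs = map (map_prod id (case_option c id)) ys"
    and "map (\<lambda>p. snd p = None) xs = map (\<lambda>p. snd p = None) ys"
  shows "xs = ys"
  using assms
proof (induction xs arbitrary: ys)
  case (Cons p xs)
  then obtain p' ys' where ys: "ys = p' # ys'"
    by (cases ys) auto
  with Cons.prems have "fst p = fst p'" "snd p = snd p'"
    using option_eq_if_case_option_eq[of c "snd p" "snd p'"]
    by (auto simp: map_prod_def split: prod.splits)
  with Cons ys show ?case
    by (simp add: prod_eq_iff)
qed simp

lemma restr_eq_if_disjoint_PiE:
  assumes "x \<in> A \<rightarrow>\<^sub>E B" and "y \<in> A \<rightarrow>\<^sub>E B" and "A \<inter> D = {}"
  shows "restr x D = restr y D"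
proof -
  have "x m = y m" if "m \<in> D" for m
  proof -
    from that assms(3) have "m \<notin> A"
      by blast
    then show ?thesis
      by (simp add: PiE_arb[OF assms(1)] PiE_arb[OF assms(2)])
  qed
  then show ?thesis
    by (simp add: restr_def fun_eq_iff)
qed

text \<open>Functions in \<open>A \<rightarrow>\<^sub>E UNIV\<close> all take the value \<^const>\<open>undefined\<close> outside \<open>A\<close>: they model
the packet contents with everything outside \<open>A\<close> held fixed.\<close>

lemma inj_on_transcript_if_decoded_by:
  assumes "decoded_by M H src sched enc n T" and "A \<subseteq> M - H n"
  shows "inj_on (\<lambda>x. transcript M H src sched enc x T) (A \<rightarrow>\<^sub>E UNIV)"
proof (rule inj_onI)
  fix x y
  assume x: "x \<in> A \<rightarrow>\<^sub>E UNIV" and y: "y \<in> A \<rightarrow>\<^sub>E UNIV"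
    and same_transcript: "transcript M H src sched enc x T = transcript M H src sched enc y T"
  have "A \<inter> H n = {}"
    using assms(2) by blast
  with x y have "restr x (H n) = restr y (H n)"
    by (rule restr_eq_if_disjoint_PiE)
  with assms(1) same_transcript have "\<forall>m \<in> M - H n. x m = y m"
    unfolding decoded_by_def by blast
  with assms(2) show "x = y"
    by (intro PiE_ext[OF x y]) auto
qed

lemma card_exponent_le_if_inj_into_lists:
  fixes g :: "('m \<Rightarrow> 'a::finite) \<Rightarrow> ('b::finite) list"
  assumes "finite A" and "inj_on g (A \<rightarrow>\<^sub>E UNIV)"
    and "\<And>x. x \<in> A \<rightarrow>\<^sub>E UNIV \<Longrightarrow> length (g x) = T"
  shows "CARD('a) ^ card A \<le> CARD('b) ^ T"
proof -
  have "CARD('a) ^ card A = card (A \<rightarrow>\<^sub>E (UNIV :: 'a set))"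
    using assms(1) by (simp add: card_PiE)
  also have "\<dots> \<le> card {xs :: 'b list. set xs \<subseteq> UNIV \<and> length xs = T}"
    using assms(2,3) finite_lists_length_eq[of "UNIV :: 'b set" T] by (intro card_inj_on_le) auto
  also have "\<dots> = CARD('b) ^ T"
    using card_lists_length_eq[of "UNIV :: 'b set" T] by simp
  finally show ?thesis .
qed

lemma card_wants_le_twice_slots:
  fixes src :: "nat \<Rightarrow> ('m \<Rightarrow> 'a option) \<Rightarrow> ('a::finite)"
  assumes "finite M" and "CARD('a) \<ge> 2"
    and "decoded_by M H src sched enc n T"
  shows "card (M - H n) \<le> 2 * T"
proof -
  let ?g = "\<lambda>x. map (map_prod id (case_option undefined id)) (transcript M H src sched enc x T)"
  have inj: "inj_on ?g ((M - H n) \<rightarrow>\<^sub>E UNIV)"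
  proof (rule inj_onI)
    fix x y
    assume x: "x \<in> (M - H n) \<rightarrow>\<^sub>E UNIV" and y: "y \<in> (M - H n) \<rightarrow>\<^sub>E UNIV" and "?g x = ?g y"
    from \<open>?g x = ?g y\<close> have "transcript M H src sched enc x T = transcript M H src sched enc y T"
      by (rule list_eq_if_erased_eq_and_None_pattern_eq) (simp add: transcript_D2D_slots)
    with x y show "x = y"
      by (rule inj_onD[OF inj_on_transcript_if_decoded_by[OF assms(3) order_refl], rotated])
  qed
  have "CARD('a) ^ card (M - H n) \<le> CARD('a \<times> 'a) ^ T"
    by (rule card_exponent_le_if_inj_into_lists[OF _ inj]) (simp_all add: assms(1) length_transcript)
  also have "\<dots> = CARD('a) ^ (2 * T)"
    by (simp add: power_mult power2_eq_square)
  finally show ?thesis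
    by (rule power_le_imp_le_exp[rotated]) (use assms(2) in simp)
qed

lemma card_common_wants_le_slots:
  fixes src :: "nat \<Rightarrow> ('m \<Rightarrow> 'a option) \<Rightarrow> ('a::finite)"
  assumes "finite M" and "n \<in> N" and "CARD('a) \<ge> 2"
    and "\<forall>t d. sched t = Some d \<longrightarrow> d \<in> N"
    and "decoded_by M H src sched enc n T"
  shows "card (\<Inter>d\<in>N. M - H d) \<le> T"
proof -
  let ?A = "\<Inter>d\<in>N. M - H d"
  let ?g = "\<lambda>x. map fst (transcript M H src sched enc x T)"
  have A_wanted: "?A \<subseteq> M - H n"
    using assms(2) by blast
  have inj: "inj_on ?g (?A \<rightarrow>\<^sub>E UNIV)"
  proof (rule inj_onI)
    fix x y
    assume x: "x \<in> ?A \<rightarrow>\<^sub>E UNIV" and y: "y \<in> ?A \<rightarrow>\<^sub>E UNIV" and "?g x = ?g y"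
    have "\<forall>d\<in>N. restr x (H d) = restr y (H d)"
      using restr_eq_if_disjoint_PiE[OF x y] by blast
    with assms(4) have "transcript M H src sched enc x T = transcript M H src sched enc y T"
      using \<open>?g x = ?g y\<close> by (rule transcript_eq_if_source_packets_eq)
    with x y show "x = y"
      by (rule inj_onD[OF inj_on_transcript_if_decoded_by[OF assms(5) A_wanted], rotated])
  qed
  have "finite ?A"
    using A_wanted by (rule finite_subset) (simp add: assms(1))
  then have "CARD('a) ^ card ?A \<le> CARD('a) ^ T"
    by (rule card_exponent_le_if_inj_into_lists[OF _ inj]) (simp add: length_transcript)
  then show ?thesis
    by (rule power_le_imp_le_exp[rotated]) (use assms(3) in simp)
qed

theorem corollary1:
  fixes N :: "'n set" and M :: "'m set" and H :: "'n \<Rightarrow> 'm set"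
    and src :: "nat \<Rightarrow> ('m \<Rightarrow> 'a option) \<Rightarrow> ('a::finite)"
    and sched :: "nat \<Rightarrow> 'n option"
    and enc :: "nat \<Rightarrow> 'n \<Rightarrow> ('m \<Rightarrow> 'a option) \<Rightarrow> ('a \<times> 'a option) list \<Rightarrow> 'a"
    and T :: nat
  assumes "finite N" and "card N \<ge> 2"
    and "finite M"
    and "\<forall>n\<in>N. H n \<subseteq> M"
    and "\<forall>m\<in>M. \<exists>n\<in>N. m \<notin> H n"
    and "card (UNIV :: 'a set) \<ge> 2"
    and "\<forall>t d. sched t = Some d \<longrightarrow> d \<in> N"
    and "\<forall>n\<in>N. decoded_by M H src sched enc n T"
  shows "int T \<ge> \<lceil>max (real (card (\<Inter>n\<in>N. M - H n)))
                      ((MAX n\<in>N. real (card (M - H n))) / 2)\<rceil>"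
proof -
  have "N \<noteq> {}"
    using assms(2) by auto
  then obtain n0 where n0: "n0 \<in> N"
    by blast
  have common: "card (\<Inter>n\<in>N. M - H n) \<le> T"
    using card_common_wants_le_slots[OF assms(3) n0 assms(6,7)] n0 assms(8) by blast
  have "real (card (M - H n)) \<le> 2 * real T" if "n \<in> N" for n
  proof -
    from that assms(8) have "decoded_by M H src sched enc n T"
      by blast
    then have "card (M - H n) \<le> 2 * T"
      by (rule card_wants_le_twice_slots[OF assms(3,6)])
    then show ?thesis
      by simp
  qed
  then have "(MAX n\<in>N. real (card (M - H n))) \<le> 2 * real T"
    using assms(1) n0 by (subst Max_le_iff) auto
  with common show ?thesis
    by (simp add: ceiling_le_iff)
qed

end
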